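(* Let $n\ge2$, $0<b_1\le\dots\le b_n$, and define $S>0$ by $S^{\frac{1}{n-1}}=\frac{2^{n+6}}{3}20^{\frac{n-2}{2}}\max_{1\le k\le n}20^{\frac{k(k-1)}{2}}\frac{b_1\cdots b_n}{b_k^n}$. Let $0<a_1\le\dots\le a_n$ satisfy $a_1\cdots a_n=b_1\cdots b_n$, $\frac{a_k}{a_{k-1}}<20$ for all $2\le k\le n-1$, and $\frac{a_n}{a_k}>20^{-\frac{n-2}{2}}S^{\frac{1}{n-1}}$ for all $1\le k\le n-1$. Then $b_k>2a_k$ for all $1\le k\le n-1$. *)

theory Defs
  imports "HOL-Analysis.Analysis"
begin

end

theory Submission
  imports Defs
begin

text \<open>
  Suppose \<open>b\<^sub>k \<le> 2 a\<^sub>k\<close>. Writing \<open>E\<^sub>k = 20^(k(k-1)/2)\<close>, \<open>B = b\<^sub>1\<cdots>b\<^sub>n\<close> and \<open>M\<close> for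
  the maximum in the definition of \<open>S\<close>, the index \<open>k\<close> of that maximum gives
  \<open>E\<^sub>k B \<le> M b\<^sub>k\<^sup>n \<le> 2\<^sup>n M a\<^sub>k\<^sup>n\<close>. On the other hand the hypothesis on \<open>a\<^sub>n / a\<^sub>n\<^sub>-\<^sub>1\<close>
  says \<open>a\<^sub>n > c M a\<^sub>n\<^sub>-\<^sub>1\<close> with \<open>c = 2\<^bsup>n+6\<^esup>/3 \<ge> 2\<^sup>n\<close>, and the ratio bound gives
  \<open>a\<^sub>k\<^sup>k \<le> E\<^sub>k a\<^sub>1\<cdots>a\<^sub>k\<close>, so splitting \<open>B = a\<^sub>1\<cdots>a\<^sub>n\<close> at \<open>k\<close> and \<open>n - 1\<close> yields
  \<open>E\<^sub>k B \<ge> a\<^sub>k\<^bsup>n-1\<^esup> a\<^sub>n > c M a\<^sub>k\<^sup>n\<close>, a contradiction.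
\<close>

lemma pos_of_stepwise_mono:
  fixes a :: "nat \<Rightarrow> real"
  assumes "a 1 > 0" and "\<And>k. 1 \<le> k \<Longrightarrow> k < n \<Longrightarrow> a k \<le> a (k + 1)"
    and "1 \<le> i" "i \<le> n"
  shows "a i > 0"
  using assms(3,4)
proof (induction i rule: dec_induct)
  case base then show ?case using assms(1) by simp
next
  case (step m) then show ?case using assms(2)[of m] by simp
qed

lemma le_of_stepwise_mono:
  fixes a :: "nat \<Rightarrow> real"
  assumes "\<And>k. 1 \<le> k \<Longrightarrow> k < n \<Longrightarrow> a k \<le> a (k + 1)"
    and "1 \<le> i" "i \<le> j" "j \<le> n"
  shows "a i \<le> a j"
  using assms(3,4)
proof (induction j rule: dec_induct)
  case base then show ?case by simp
next
  case (step m) then show ?case using assms(1)[of m] assms(2) by simp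
qed

lemma pow_le_powr_mul_prod_of_ratio_le:
  fixes a :: "nat \<Rightarrow> real"
  assumes pos: "\<And>i. 1 \<le> i \<Longrightarrow> i \<le> m \<Longrightarrow> a i > 0"
    and ratio: "\<And>i. 2 \<le> i \<Longrightarrow> i \<le> m \<Longrightarrow> a i / a (i - 1) \<le> r"
    and "r > 0" "1 \<le> k" "k \<le> m"
  shows "a k ^ k \<le> r powr (real k * (real k - 1) / 2) * (\<Prod>i=1..k. a i)"
  using assms(4,5)
proof (induction k rule: dec_induct)
  case base then show ?case using assms(3) by simp
next
  case (step j)
  have aj: "a j > 0" and aSj: "a (Suc j) > 0" using pos step by auto
  have "a (Suc j) / a j \<le> r" using ratio[of "Suc j"] step by simp
  hence r: "a (Suc j) \<le> r * a j" using aj by (simp add: divide_le_eq)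
  have "a (Suc j) ^ Suc j = a (Suc j) ^ j * a (Suc j)" by simp
  also have "\<dots> \<le> r ^ j * a j ^ j * a (Suc j)"
    using r aj aSj by (simp add: mult_right_mono power_mono flip: power_mult_distrib)
  also have "\<dots> \<le> r ^ j * (r powr (real j * (real j - 1) / 2) * (\<Prod>i=1..j. a i)) * a (Suc j)"
    using step assms(3) aSj by (intro mult_right_mono mult_left_mono) auto
  also have "\<dots> = (r powr real j * r powr (real j * (real j - 1) / 2)) * ((\<Prod>i=1..j. a i) * a (Suc j))"
    using assms(3) by (simp add: powr_realpow)
  also have "r powr real j * r powr (real j * (real j - 1) / 2)
      = r powr (real (Suc j) * (real (Suc j) - 1) / 2)"
    by (simp add: powr_add[symmetric] algebra_simps add_divide_distrib diff_divide_distrib)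
  also have "(\<Prod>i=1..j. a i) * a (Suc j) = (\<Prod>i=1..Suc j. a i)"
    using step by (simp add: prod.nat_ivl_Suc')
  finally show ?case .
qed

lemma mul_pow_lt_powr_mul_prod:
  fixes a :: "nat \<Rightarrow> real"
  assumes pos: "\<And>i. 1 \<le> i \<Longrightarrow> i \<le> n \<Longrightarrow> a i > 0"
    and mono: "\<And>i. 1 \<le> i \<Longrightarrow> i < n \<Longrightarrow> a i \<le> a (i + 1)"
    and ratio: "\<And>i. 2 \<le> i \<Longrightarrow> i \<le> n - 1 \<Longrightarrow> a i / a (i - 1) \<le> r"
    and "r > 0" and last: "a n > C * a (n - 1)" and "C \<ge> 0"
    and k: "1 \<le> k" "k \<le> n - 1"
  shows "C * a k ^ n < r powr (real k * (real k - 1) / 2) * (\<Prod>i=1..n. a i)"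
proof -
  define E where "E = r powr (real k * (real k - 1) / 2)"
  have "n \<ge> 2" and ak: "a k > 0" using k pos by auto
  have a_le: "a i \<le> a j" if "1 \<le> i" "i \<le> j" "j \<le> n" for i j
    using mono that by (rule le_of_stepwise_mono)
  have prod_split: "(\<Prod>i=1..n. a i) = (\<Prod>i=1..k. a i) * (\<Prod>i=k+1..n-1. a i) * a n"
  proof -
    have "{1..n-1} = {1..k} \<union> {k+1..n-1}" using k by auto
    moreover have "(\<Prod>i=1..n. a i) = (\<Prod>i=1..n-1. a i) * a n"
      using \<open>n \<ge> 2\<close> by (cases n) (simp_all add: prod.nat_ivl_Suc')
    ultimately show ?thesis by (simp add: prod.union_disjoint)
  qed
  have head: "a k ^ k \<le> E * (\<Prod>i=1..k. a i)"
    unfolding E_def using pos ratio k \<open>r > 0\<close> by (intro pow_le_powr_mul_prod_of_ratio_le) auto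
  have middle: "a k ^ (n - 1 - k) \<le> (\<Prod>i=k+1..n-1. a i)"
  proof -
    have "(\<Prod>i=k+1..n-1. a k) \<le> (\<Prod>i=k+1..n-1. a i)"
      using ak k by (intro prod_mono) (auto intro: a_le)
    then show ?thesis by simp
  qed
  have "C * a k ^ n = a k ^ k * a k ^ (n - 1 - k) * (C * a k)"
    using k \<open>n \<ge> 2\<close> by (simp add: power_add[symmetric] power_Suc2[symmetric])
  also have "\<dots> \<le> a k ^ k * a k ^ (n - 1 - k) * (C * a (n - 1))"
    using a_le[of k "n - 1"] k ak \<open>C \<ge> 0\<close>
    by (intro mult_left_mono) auto
  also have "\<dots> < a k ^ k * a k ^ (n - 1 - k) * a n"
    using last ak by simp
  also have "\<dots> \<le> E * (\<Prod>i=1..k. a i) * (\<Prod>i=k+1..n-1. a i) * a n"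
    using head middle ak pos[of n] order_trans[OF zero_le_power head] \<open>n \<ge> 2\<close>
    by (intro mult_right_mono mult_mono) (auto intro!: prod_nonneg less_imp_le[OF pos])
  finally show ?thesis unfolding prod_split E_def by (simp add: mult.assoc)
qed

theorem lemma3p6:
  fixes n :: nat and a b :: "nat \<Rightarrow> real" and S :: real
  assumes n2: "n \<ge> 2"
    and bpos: "b 1 > 0"
    and bmono: "\<And>k. 1 \<le> k \<Longrightarrow> k < n \<Longrightarrow> b k \<le> b (k + 1)"
    and Spos: "S > 0"
    and Sdef: "S powr (1 / (real n - 1)) =
      (2 ^ (n + 6) / 3) * 20 powr ((real n - 2) / 2) *
      (MAX k\<in>{1..n}. 20 powr (real k * (real k - 1) / 2) * (\<Prod>i=1..n. b i) / (b k) ^ n)"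
    and apos: "a 1 > 0"
    and amono: "\<And>k. 1 \<le> k \<Longrightarrow> k < n \<Longrightarrow> a k \<le> a (k + 1)"
    and prod_eq: "(\<Prod>i=1..n. a i) = (\<Prod>i=1..n. b i)"
    and ratio: "\<And>k. 2 \<le> k \<Longrightarrow> k \<le> n - 1 \<Longrightarrow> a k / a (k - 1) < 20"
    and big: "\<And>k. 1 \<le> k \<Longrightarrow> k \<le> n - 1 \<Longrightarrow>
      a n / a k > 20 powr (- ((real n - 2) / 2)) * S powr (1 / (real n - 1))"
  shows "\<forall>k. 1 \<le> k \<and> k \<le> n - 1 \<longrightarrow> b k > 2 * a k"
proof (intro allI impI, rule ccontr)
  fix k assume k: "1 \<le> k \<and> k \<le> n - 1" and "\<not> b k > 2 * a k"
  define M where "M = (MAX k\<in>{1..n}. 20 powr (real k * (real k - 1) / 2) * (\<Prod>i=1..n. b i) / (b k) ^ n)"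
  define E :: real where "E = 20 powr (real k * (real k - 1) / 2)"
  define c :: real where "c = 2 ^ (n + 6) / 3"
  have ap: "a i > 0" if "1 \<le> i" "i \<le> n" for i
    using apos amono that by (rule pos_of_stepwise_mono)
  have bp: "b i > 0" if "1 \<le> i" "i \<le> n" for i
    using bpos bmono that by (rule pos_of_stepwise_mono)
  have ak: "a k > 0" using ap k by auto
  have bk: "0 < b k" "b k \<le> 2 * a k" using bp k \<open>\<not> b k > 2 * a k\<close> by auto
  have M_ge: "E * (\<Prod>i=1..n. b i) / b k ^ n \<le> M"
    unfolding M_def E_def by (rule Max_ge) (use k in auto)
  have "0 \<le> E * (\<Prod>i=1..n. b i) / b k ^ n"
    unfolding E_def using bp bk
    by (intro divide_nonneg_nonneg mult_nonneg_nonneg prod_nonneg) (auto intro: less_imp_le)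
  with M_ge have "M \<ge> 0" by linarith
  have "a n / a (n - 1) > c * M"
    using big[of "n - 1"] n2 unfolding Sdef c_def M_def by (simp add: powr_minus field_simps)
  hence "c * M * a k ^ n < E * (\<Prod>i=1..n. b i)"
    unfolding E_def prod_eq[symmetric] using ap amono ratio k n2 \<open>M \<ge> 0\<close>
    by (intro mul_pow_lt_powr_mul_prod) (auto simp: less_divide_eq less_imp_le c_def)
  also have "\<dots> \<le> M * b k ^ n"
    using M_ge bk by (simp add: divide_le_eq)
  also have "\<dots> \<le> M * (2 * a k) ^ n"
    using bk \<open>M \<ge> 0\<close> by (intro mult_left_mono power_mono) auto
  also have "\<dots> \<le> c * M * a k ^ n"
    using \<open>M \<ge> 0\<close> ak
    by (simp add: c_def power_mult_distrib power_add mult_right_mono mult_nonneg_nonneg)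
  finally show False by simp
qed

end
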